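(* Fix an integer $k\ge 1$. For integers $a<b$ with $b-a\le k$, and $c<d$ with $d-c\le k$, write $\bar a,\bar b,\bar c,\bar d$ for the residues of $a,b,c,d$ modulo $k+1$. For every $u\in W^0$ the following hold, where $u\,\mathbf{t}_{ab}\mathbf{t}_{cd}$ means $(u\,\mathbf{t}_{ab})\,\mathbf{t}_{cd}$ and all operators written are assumed to have index differences between $1$ and $k$: (A) If $\bar a,\bar b,\bar c,\bar d$ are pairwise distinct, then $u\,\mathbf{t}_{ab}\mathbf{t}_{cd}=u\,\mathbf{t}_{cd}\mathbf{t}_{ab}$. (B1) If $a<c<b<d$, or if $b=c$ and $d-a>k+1$, then $u\,\mathbf{t}_{ab}\mathbf{t}_{cd}=u\,\mathbf{t}_{cd}\mathbf{t}_{ab}=0$. (B2) If ($\bar a=\bar c$ and $b\le d$) or ($\bar b=\bar d$ and $c\le a$), then $u\,\mathbf{t}_{ab}\mathbf{t}_{cd}=0$. (C1) If $a<b<d$ and $d-a=k+1$, then $u\,\mathbf{t}_{ab}\mathbf{t}_{bd}=u\,\mathbf{t}_{ab}\mathbf{t}_{b-k-1,a}$. (D) If $a<b<c<d$, $\bar b=\bar c$, $\bar d=\bar a$ and $(b-a)+(d-c)=k+1$, then $u\,\mathbf{t}_{ab}\mathbf{t}_{cd}=u\,\mathbf{t}_{d-k-1,c}\mathbf{t}_{b-k-1,a}$. (E1) If $a<b<c<d$ with $c-a\le k$ and $d-b\le k$, then $u\,\mathbf{t}_{bc}\mathbf{t}_{cd}\mathbf{t}_{ac}=u\,\mathbf{t}_{bd}\mathbf{t}_{ab}\mathbf{t}_{bc}$.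 (E2) If $a<b<c<d$ with $c-a\le k$ and $d-b\le k$, then $u\,\mathbf{t}_{ac}\mathbf{t}_{cd}\mathbf{t}_{bc}=u\,\mathbf{t}_{bc}\mathbf{t}_{ab}\mathbf{t}_{bd}$. (F) If $a<b<c$ and $c-a<k+1$, then $u\,\mathbf{t}_{bc}\mathbf{t}_{ab}\mathbf{t}_{bc}=u\,\mathbf{t}_{ab}\mathbf{t}_{bc}\mathbf{t}_{ab}=0$.
   Context: Fix an integer $k\ge1$. The affine symmetric group $W$ is the group of bijections $u:\mathbb Z\to\mathbb Z$ with $u(i+k+1)=u(i)+k+1$ for all $i$ and $u(1)+\cdots+u(k+1)=\binom{k+2}{2}$; the product is composition, $(uw)(i)=u(w(i))$. It is generated by $s_0,\dots,s_k$, where $s_i$ swaps $i+m(k+1)$ and $i+1+m(k+1)$ for all $m\in\mathbb Z$ and fixes everything else; $\ell(u)$ is the Coxeter length (minimal number of generators in an expression for $u$). For integers $a<b$ with $b-a\le k$, $t_{a,b}\in W$ is the element swapping $a+m(k+1)$ and $b+m(k+1)$ for all $m$ (so $(ut_{a,b})(a)=u(b)$). The set $W^0$ of affine $0$-grassmannian permutations consists of those $u\in W$ in which the values $1,2,\dots,k+1$ appear from left to right, i.e. $u^{-1}(1)<u^{-1}(2)<\cdots<u^{-1}(k+1)$. The operator $\mathbf{t}_{ab}$ on $\mathbb ZW$ acts on the right by $u\,\mathbf{t}_{ab}=u\,t_{a,b}$ if $\ell(ut_{a,b})=\ell(u)+1$ and $u(a)\le 0<u(b)$, and $u\,\mathbf{t}_{ab}=0$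 otherwise, extended linearly (with $0\,\mathbf{t}_{cd}=0$). (It is a known fact that $\ell(ut_{a,b})=\ell(u)+1$ iff $u(a)<u(b)$ and every $a<i<b$ has $u(i)<u(a)$ or $u(i)>u(b)$.) *)

theory Defs
  imports Main
begin

definition affW :: "nat \<Rightarrow> (int \<Rightarrow> int) set" where
  "affW k = {u. bij u \<and> (\<forall>i. u (i + int k + 1) = u i + int k + 1)
              \<and> (\<Sum>i=1..int k + 1. u i) = int ((k + 2) choose 2)}"

(* t_{a,b}: swaps a+m(k+1) and b+m(k+1) for all m (meaningful for a<b, b-a<=k) *)
definition tr :: "nat \<Rightarrow> int \<Rightarrow> int \<Rightarrow> int \<Rightarrow> int" where
  "tr k a b i = (if i mod (int k + 1) = a mod (int k + 1) then i + (b - a)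
                 else if i mod (int k + 1) = b mod (int k + 1) then i - (b - a)
                 else i)"

definition sgen :: "nat \<Rightarrow> int \<Rightarrow> int \<Rightarrow> int" where
  "sgen k i = tr k i (i + 1)"

definition clen :: "nat \<Rightarrow> (int \<Rightarrow> int) \<Rightarrow> nat" where
  "clen k u = (LEAST n. \<exists>ws. length ws = n \<and> set ws \<subseteq> {0..int k}
                     \<and> u = foldr (\<circ>) (map (sgen k) ws) id)"

definition affW0 :: "nat \<Rightarrow> (int \<Rightarrow> int) set" where
  "affW0 k = {u \<in> affW k. \<forall>i j. 1 \<le> i \<longrightarrow> i < j \<longrightarrow> j \<le> int k + 1 \<longrightarrow> inv u i < inv u j}"

(* action of the operator t_ab on a basis element: None encodes 0 *)
definition tbas :: "nat \<Rightarrow> int \<Rightarrow> int \<Rightarrow> (int \<Rightarrow> int) \<Rightarrow> (int \<Rightarrow> int) option" where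
  "tbas k a b u = (if clen k (u \<circ> tr k a b) = clen k u + 1 \<and> u a \<le> 0 \<and> 0 < u b
                   then Some (u \<circ> tr k a b) else None)"

(* The group ring ZW: finitely supported integer-valued functions on permutations.
   (The ambient type is all functions; all elements we use are finitely supported.) *)
type_synonym zw = "(int \<Rightarrow> int) \<Rightarrow> int"

definition zw_zero :: zw where
  "zw_zero = (\<lambda>_. 0)"

definition basis :: "(int \<Rightarrow> int) \<Rightarrow> zw" where
  "basis u = (\<lambda>v. if v = u then 1 else 0)"

(* linear extension of the right action of the operator t_ab:  f t_ab *)
definition topr :: "nat \<Rightarrow> int \<Rightarrow> int \<Rightarrow> zw \<Rightarrow> zw" where
  "topr k a b f = (\<lambda>w. \<Sum>u\<in>{u. f u \<noteq> 0 \<and> tbas k a b u = Some w}. f u)"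

definition okp :: "nat \<Rightarrow> int \<Rightarrow> int \<Rightarrow> bool" where
  "okp k a b \<longleftrightarrow> a < b \<and> b - a \<le> int k"

end

theory Submission
  imports Defs
begin

text \<open>By Shi's formula the length of an affine permutation counts its inversions, and right
  multiplication by \<open>t_ab\<close> raises it by exactly one iff \<open>u a < u b\<close> and no point \<open>(i, u i)\<close> of the
  graph of \<open>u\<close> with \<open>a < i < b\<close> lies strictly between the levels \<open>u a\<close> and \<open>u b\<close>. So \<open>u t_ab\<close> is
  nonzero iff \<open>u a \<le> 0 < u b\<close> and this rectangle is empty, and each relation reduces to finitely
  many values of \<open>u\<close>: both sides are the same permutation (transpositions of distinct residues
  commute, and conjugating a transposition by another one sharing an index moves that index), and
  the side conditions are compared by following how the transpositions move the relevant points
  of the graph. The mirror \<open>u \<mapsto> (\<lambda>i. 1 - u (1 - i))\<close> preserves length and turns \<open>t_ab\<close> into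
  \<open>t_(1-b)(1-a)\<close>; reversing the order of the indices, it exchanges the two halves of (B1), (B2),
  (E) and (F).\<close>

abbreviation period :: "nat \<Rightarrow> int" where
  "period k \<equiv> int k + 1"

lemma mod_period_eq_imp_eq:
  assumes "x mod period k = y mod period k" and "\<bar>x - y\<bar> < period k"
  shows "x = y"
proof -
  obtain m where m: "x - y = period k * m"
    using assms(1) mod_eq_dvd_iff dvd_def by metis
  then have "\<bar>period k * m\<bar> < period k" using assms(2) by simp
  then have "period k * \<bar>m\<bar> < period k * 1" by (simp add: abs_mult)
  then have "m = 0" by (subst (asm) mult_less_cancel_left_pos) auto
  then show ?thesis using m by simp
qed

lemma mod_period_neq: "p < q \<Longrightarrow> q < p + period k \<Longrightarrow> p mod period k \<noteq> q mod period k"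
  using mod_period_eq_imp_eq[of p k q] by auto

lemma mod_period_eq_iff: "x mod period k = y mod period k \<longleftrightarrow> (\<exists>m. y = x + m * period k)"
proof
  assume "x mod period k = y mod period k"
  then obtain m where "y - x = period k * m"
    by (metis mod_eq_dvd_iff dvd_def)
  then show "\<exists>m. y = x + m * period k" by (intro exI[of _ m]) (simp add: algebra_simps)
qed auto

lemma okp_mod_neq: "okp k a b \<Longrightarrow> a mod period k \<noteq> b mod period k"
  unfolding okp_def using mod_period_neq by simp

lemma affW_shift:
  assumes "u \<in> affW k"
  shows "u (i + m * period k) = u i + m * period k"
proof (induction m rule: int_induct[of _ 0])
  case (step1 m)
  have "u (i + (m + 1) * period k) = u ((i + m * period k) + int k + 1)" by (simp add: algebra_simps)
  also have "\<dots> = u (i + m * period k) + int k + 1" using assms unfolding affW_def by blast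
  finally show ?case using step1 by (simp add: algebra_simps)
next
  case (step2 m)
  have "u (i + m * period k) = u ((i + (m - 1) * period k) + int k + 1)" by (simp add: algebra_simps)
  also have "\<dots> = u (i + (m - 1) * period k) + int k + 1" using assms unfolding affW_def by blast
  finally show ?case using step2 by (simp add: algebra_simps)
qed simp

lemma affW_shift_diff: "u \<in> affW k \<Longrightarrow> u (i - m * period k) = u i - m * period k"
  using affW_shift[of u k i "- m"] by simp

lemma affW_inj: "u \<in> affW k \<Longrightarrow> inj u"
  unfolding affW_def bij_def by auto

lemma affW_mod_iff:
  assumes "u \<in> affW k"
  shows "u x mod period k = u y mod period k \<longleftrightarrow> x mod period k = y mod period k"
proof
  assume "u x mod period k = u y mod period k"
  then obtain m where "u y = u x + m * period k" using mod_period_eq_iff by blast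
  then have "u y = u (x + m * period k)" using affW_shift[OF assms] by simp
  then show "x mod period k = y mod period k" using injD[OF affW_inj[OF assms]] by fastforce
qed (auto simp: mod_period_eq_iff affW_shift[OF assms])

lemma tr_left: "i mod period k = a mod period k \<Longrightarrow> tr k a b i = i + (b - a)"
  unfolding tr_def by simp

lemma tr_right: "a mod period k \<noteq> b mod period k \<Longrightarrow> i mod period k = b mod period k \<Longrightarrow> tr k a b i = i - (b - a)"
  unfolding tr_def by simp

lemma tr_other: "i mod period k \<noteq> a mod period k \<Longrightarrow> i mod period k \<noteq> b mod period k \<Longrightarrow> tr k a b i = i"
  unfolding tr_def by simp

lemma tr_left_shift: "tr k a b (a + m * period k) = b + m * period k"
  by (simp add: tr_left)

lemma tr_right_shift: "a mod period k \<noteq> b mod period k \<Longrightarrow> tr k a b (b + m * period k) = a + m * period k"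
  by (simp add: tr_right)

lemma tr_left_eq: "tr k a b a = b"
  using tr_left_shift[where m = 0] by simp

lemma tr_right_eq: "a mod period k \<noteq> b mod period k \<Longrightarrow> tr k a b b = a"
  using tr_right_shift[where m = 0] by simp

lemma tr_shift: "tr k a b (i + m * period k) = tr k a b i + m * period k"
  unfolding tr_def by simp

lemma mod_add_diff_left: "i mod period k = a mod period k \<Longrightarrow> (i + (b - a)) mod period k = b mod period k"
  using mod_add_cong[of i "period k" a "b - a" "b - a"] by simp

lemma mod_diff_diff_right: "i mod period k = b mod period k \<Longrightarrow> (i - (b - a)) mod period k = a mod period k"
  using mod_diff_cong[of i "period k" b "b - a" "b - a"] by simp

lemma tr_invol:
  assumes "a mod period k \<noteq> b mod period k"
  shows "tr k a b (tr k a b i) = i"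
  using assms mod_add_diff_left[of i k a b] mod_diff_diff_right[of i k b a]
  by (cases "i mod period k = a mod period k"; cases "i mod period k = b mod period k")
     (simp_all add: tr_left tr_right tr_other)

lemma comp_tr_tr:
  assumes "a mod period k \<noteq> b mod period k"
  shows "f \<circ> tr k a b \<circ> tr k a b = f"
  using tr_invol[OF assms] by (simp add: fun_eq_iff)

lemma tr_bij: "a mod period k \<noteq> b mod period k \<Longrightarrow> bij (tr k a b)"
  by (rule o_bij[of "tr k a b"]) (auto simp: tr_invol)

lemma tr_swap: "a mod period k \<noteq> b mod period k \<Longrightarrow> tr k b a = tr k a b"
  unfolding tr_def by (auto simp: fun_eq_iff)

lemma tr_cong:
  "p mod period k = p' mod period k \<Longrightarrow> q mod period k = q' mod period k \<Longrightarrow> q - p = q' - p'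
    \<Longrightarrow> tr k p q = tr k p' q'"
  unfolding tr_def by (simp add: fun_eq_iff)

lemma tr_mod:
  assumes "a mod period k \<noteq> b mod period k"
  shows "tr k a b i mod period k =
    (if i mod period k = a mod period k then b mod period k
     else if i mod period k = b mod period k then a mod period k else i mod period k)"
  using assms mod_add_diff_left[of i k a b] mod_diff_diff_right[of i k b a]
  by (auto simp: tr_left tr_right tr_other)

lemma tr_comm:
  assumes "a mod period k \<noteq> c mod period k" "a mod period k \<noteq> d mod period k"
    "b mod period k \<noteq> c mod period k" "b mod period k \<noteq> d mod period k"
    "a mod period k \<noteq> b mod period k" "c mod period k \<noteq> d mod period k"
  shows "tr k a b \<circ> tr k c d = tr k c d \<circ> tr k a b"
proof
  fix i
  consider "i mod period k = a mod period k \<or> i mod period k = b mod period k"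
    | "i mod period k = c mod period k \<or> i mod period k = d mod period k"
    | "i mod period k \<notin> {a mod period k, b mod period k, c mod period k, d mod period k}"
    by blast
  then show "(tr k a b \<circ> tr k c d) i = (tr k c d \<circ> tr k a b) i"
  proof cases
    case 1
    then have "tr k c d i = i" "tr k c d (tr k a b i) = tr k a b i"
      using assms tr_mod[OF assms(5), of i] by (auto intro!: tr_other)
    then show ?thesis by simp
  next
    case 2
    then have "tr k a b i = i" "tr k a b (tr k c d i) = tr k c d i"
      using assms tr_mod[OF assms(6), of i] by (auto intro!: tr_other)
    then show ?thesis by simp
  qed (simp add: tr_other)
qed

lemma tr_conj:
  assumes xy: "x mod period k \<noteq> y mod period k" and yz: "y mod period k \<noteq> z mod period k"
    and xz: "x mod period k \<noteq> z mod period k"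
  shows "tr k x y \<circ> tr k y z \<circ> tr k x y = tr k x z"
proof
  fix i
  consider (x) "i mod period k = x mod period k" | (y) "i mod period k = y mod period k"
    | (z) "i mod period k = z mod period k"
    | (none) "i mod period k \<notin> {x mod period k, y mod period k, z mod period k}"
    by blast
  then show "(tr k x y \<circ> tr k y z \<circ> tr k x y) i = tr k x z i"
  proof cases
    case x
    have 1: "tr k x y i = i + (y - x)" and c1: "(i + (y - x)) mod period k = y mod period k"
      using x by (simp_all add: tr_left mod_add_diff_left)
    have 2: "tr k y z (i + (y - x)) = i + (z - x)" and c2: "(i + (z - x)) mod period k = z mod period k"
      using c1 x by (simp_all add: tr_left mod_add_diff_left)
    have "tr k x y (i + (z - x)) = i + (z - x)" using c2 xz yz by (simp add: tr_other)
    then show ?thesis using 1 2 x by (simp add: tr_left)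
  next
    case y
    have 1: "tr k x y i = i - (y - x)" and c1: "(i - (y - x)) mod period k = x mod period k"
      using y xy by (simp_all add: tr_right mod_diff_diff_right)
    have "tr k y z (i - (y - x)) = i - (y - x)" using c1 xy xz by (simp add: tr_other)
    moreover have "tr k x y (i - (y - x)) = i" using c1 by (simp add: tr_left)
    ultimately show ?thesis using 1 y xy yz by (simp add: tr_other)
  next
    case z
    have 1: "tr k x y i = i" using z xz yz by (simp add: tr_other)
    have 2: "tr k y z i = i - (z - y)" and c2: "(i - (z - y)) mod period k = y mod period k"
      using z yz by (simp_all add: tr_right mod_diff_diff_right)
    have "tr k x y (i - (z - y)) = i - (z - x)" using c2 xy by (simp add: tr_right)
    then show ?thesis using 1 2 z xz by (simp add: tr_right)
  qed (simp add: tr_other)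
qed

lemma tr_window:
  assumes "okp k a b" "a \<le> i" "i < a + period k"
  shows "tr k a b i = (if i = a then b else if i = b then a else i)"
proof -
  have "a < b" "b < a + period k" using assms(1) unfolding okp_def by auto
  then have "i mod period k = a mod period k \<longleftrightarrow> i = a" "i mod period k = b mod period k \<longleftrightarrow> i = b"
    using assms(2,3) mod_period_eq_imp_eq[of i k a] mod_period_eq_imp_eq[of i k b] by auto
  then show ?thesis using okp_mod_neq[OF assms(1)] tr_left_eq[of k a b] tr_right_eq[of a k b]
    by (auto simp: tr_other)
qed

definition window_sum :: "nat \<Rightarrow> (int \<Rightarrow> int) \<Rightarrow> int \<Rightarrow> int" where
  "window_sum k f m = (\<Sum>i\<in>{m..<m + period k}. f i - i)"

lemma window_sum_shift:
  assumes per: "\<And>i. f (i + period k) = f i + period k"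
  shows "window_sum k f m = window_sum k f 1"
proof -
  have step: "window_sum k f (j + 1) = window_sum k f j" for j
  proof -
    have "{j + 1..<j + 1 + period k} = insert (j + period k) {j + 1..<j + period k}"
      "{j..<j + period k} = insert j {j + 1..<j + period k}" by auto
    then show ?thesis unfolding window_sum_def using per[of j] by simp
  qed
  show ?thesis
    by (induction m rule: int_induct[of _ 1]) (use step[of "_ - 1"] step in simp_all)
qed

lemma affW_iff_window_sum:
  "u \<in> affW k \<longleftrightarrow> bij u \<and> (\<forall>i. u (i + period k) = u i + period k) \<and> window_sum k u 1 = 0"
proof -
  have "(\<Sum>i=1..int k + 1. i) = int ((k + 2) choose 2)"
  proof (induction k)
    case (Suc k)
    have "{1..int (Suc k) + 1} = insert (int k + 2) {1..int k + 1}" by auto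
    moreover have "Suc (Suc (Suc k)) choose 2 = Suc (Suc k) + (Suc (Suc k) choose 2)"
      by (simp add: numeral_2_eq_2)
    ultimately show ?case using Suc by simp
  qed (simp add: numeral_2_eq_2)
  moreover have "{1..<1 + period k} = {1..int k + 1}" by auto
  ultimately show ?thesis unfolding affW_def window_sum_def
    by (auto simp: sum_subtractf add.assoc)
qed

lemma id_affW: "id \<in> affW k"
  by (simp add: affW_iff_window_sum window_sum_def)

text \<open>\<open>tr k a b\<close> permutes the window starting at \<open>a\<close>, so the window sum is unchanged.\<close>

lemma affW_comp_tr:
  assumes u: "u \<in> affW k" and ab: "okp k a b"
  shows "u \<circ> tr k a b \<in> affW k"
proof -
  let ?t = "tr k a b" and ?I = "{a..<a + period k}"
  have per_u: "\<And>i. u (i + period k) = u i + period k" using affW_shift[OF u, of _ 1] by simp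
  have per: "\<And>i. (u \<circ> ?t) (i + period k) = (u \<circ> ?t) i + period k"
    using tr_shift[of k a b _ 1] per_u by simp
  have bij: "bij (u \<circ> ?t)"
    using tr_bij[OF okp_mod_neq[OF ab]] u unfolding affW_def by (auto intro: bij_comp)
  have "a < b" "b < a + period k" using ab unfolding okp_def by auto
  then have "?t ` ?I \<subseteq> ?I" using tr_window[OF ab] by auto
  then have bw: "bij_betw ?t ?I ?I"
    by (intro bij_betw_byWitness[where f'="?t"]) (auto simp: tr_invol okp_mod_neq[OF ab])
  have "window_sum k (u \<circ> ?t) a = (\<Sum>i\<in>?I. u (?t i) - ?t i) + ((\<Sum>i\<in>?I. ?t i) - (\<Sum>i\<in>?I. i))"
    unfolding window_sum_def by (simp add: sum.distrib[symmetric] sum_subtractf)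
  also have "\<dots> = window_sum k u a"
    using sum.reindex_bij_betw[OF bw, of "\<lambda>i. u i - i"] sum.reindex_bij_betw[OF bw, of id]
    unfolding window_sum_def by simp
  finally show ?thesis
    using u bij per window_sum_shift[of "u \<circ> ?t", OF per, of a] window_sum_shift[of u, OF per_u, of a]
    unfolding affW_iff_window_sum by simp
qed

section \<open>Length as an inversion count\<close>

definition inv_pairs :: "nat \<Rightarrow> int \<Rightarrow> (int \<times> int) set" where
  "inv_pairs k m = {(i, j). m \<le> i \<and> i < j \<and> j < m + period k}"

text \<open>Shi's formula: \<open>\<ell>(u)\<close> is the sum of \<open>\<bar>(u j - u i) div (k + 1)\<bar>\<close> over the pairs \<open>i < j\<close>
  of one window, the number of inversions between the residue classes of \<open>i\<close> and \<open>j\<close>.\<close>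

definition inv_count :: "nat \<Rightarrow> (int \<Rightarrow> int) \<Rightarrow> int \<Rightarrow> int" where
  "inv_count k u m = (\<Sum>(i, j)\<in>inv_pairs k m. \<bar>(u j - u i) div period k\<bar>)"

definition asc_sign :: "(int \<Rightarrow> int) \<Rightarrow> int \<Rightarrow> int \<Rightarrow> int" where
  "asc_sign u p q = (if u p < u q then 1 else -1)"

lemma finite_inv_pairs: "finite (inv_pairs k m)"
  by (rule finite_subset[of _ "{m..<m + period k} \<times> {m..<m + period k}"]) (auto simp: inv_pairs_def)

lemma inv_count_nonneg: "inv_count k u m \<ge> 0"
  unfolding inv_count_def by (rule sum_nonneg) auto

lemma div_period_swap:
  assumes u: "u \<in> affW k" and pq: "p mod period k \<noteq> q mod period k"
  shows "(u p - u q) div period k = - ((u q - u p) div period k) - 1"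
proof -
  have "u q mod period k \<noteq> u p mod period k" using pq affW_mod_iff[OF u, of q p] by auto
  then have "\<not> period k dvd (u q - u p)" by (simp add: mod_eq_dvd_iff)
  then show ?thesis using zdiv_zminus1_eq_if[of "period k" "u q - u p"] by (simp add: dvd_eq_mod_eq_0)
qed

lemma abs_div_period_swap:
  assumes u: "u \<in> affW k" and pq: "p mod period k \<noteq> q mod period k"
  shows "\<bar>(u p - u q) div period k\<bar> - \<bar>(u q - u p) div period k\<bar> = asc_sign u p q"
proof (cases "u p < u q")
  case True
  then have "(u q - u p) div period k \<ge> 0" by (simp add: pos_imp_zdiv_nonneg_iff)
  then show ?thesis using True div_period_swap[OF u pq] by (simp add: asc_sign_def)
next
  case False
  then have "u p > u q" using injD[OF affW_inj[OF u], of p q] pq by fastforce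
  then have "(u q - u p) div period k < 0" by (simp add: pos_imp_zdiv_neg_iff)
  then show ?thesis using False div_period_swap[OF u pq] by (simp add: asc_sign_def)
qed

lemma abs_div_period_shift:
  assumes u: "u \<in> affW k" and pq: "p mod period k \<noteq> q mod period k"
  shows "\<bar>(u (p + period k) - u q) div period k\<bar> = \<bar>(u q - u p) div period k\<bar>"
proof -
  have "u (p + period k) - u q = (u p - u q) + period k" using affW_shift[OF u, of p 1] by simp
  then have "(u (p + period k) - u q) div period k = (u p - u q) div period k + 1"
    by (simp only:) (rule div_add_self2, simp)
  then show ?thesis using div_period_swap[OF u pq] by simp
qed

lemma inv_count_shift:
  assumes u: "u \<in> affW k"
  shows "inv_count k u m = inv_count k u 1"
proof -
  let ?w = "\<lambda>i j. \<bar>(u j - u i) div period k\<bar>"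
  have step: "inv_count k u (j + 1) = inv_count k u j" for j
  proof -
    let ?S = "{j<..<j + period k}" and ?Q = "{(i, l). j < i \<and> i < l \<and> l < j + period k}"
    have fin: "finite ?Q" by (rule finite_subset[of _ "?S \<times> ?S"]) auto
    have "inv_pairs k j = ?Q \<union> Pair j ` ?S" "inv_pairs k (j + 1) = ?Q \<union> (\<lambda>i. (i, j + period k)) ` ?S"
      unfolding inv_pairs_def by auto
    moreover have "?Q \<inter> Pair j ` ?S = {}" "?Q \<inter> (\<lambda>i. (i, j + period k)) ` ?S = {}" by auto
    ultimately have "inv_count k u j = (\<Sum>(i, l)\<in>?Q. ?w i l) + (\<Sum>i\<in>?S. ?w j i)"
      "inv_count k u (j + 1) = (\<Sum>(i, l)\<in>?Q. ?w i l) + (\<Sum>i\<in>?S. ?w i (j + period k))"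
      unfolding inv_count_def using fin
      by (simp_all add: sum.union_disjoint sum.reindex inj_on_def)
    moreover have "?w i (j + period k) = ?w j i" if "i \<in> ?S" for i
      using that abs_div_period_shift[OF u, of j i] mod_period_neq by auto
    ultimately show ?thesis by simp
  qed
  show ?thesis
    by (induction m rule: int_induct[of _ 1]) (use step[of "_ - 1"] step in simp_all)
qed

lemma inv_count_id: "inv_count k id m = 0"
  unfolding inv_count_def inv_pairs_def by (rule sum.neutral) (auto simp: div_pos_pos_trivial)

text \<open>\<open>Y\<close> collects the pairs of the window starting at \<open>a\<close> whose order \<open>tr k a b\<close> reverses.\<close>

lemma tr_image_inv_pairs:
  fixes a b :: int
  defines "Y \<equiv> {(p, q). (p = a \<and> a < q \<and> q \<le> b) \<or> (q = b \<and> a < p \<and> p < b)}"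
  assumes ab: "okp k a b"
  shows "map_prod (tr k a b) (tr k a b) ` inv_pairs k a = (inv_pairs k a - Y) \<union> prod.swap ` Y"
proof -
  let ?t = "tr k a b" and ?P = "inv_pairs k a" and ?W = "{a..<a + period k}"
  let ?\<sigma> = "map_prod ?t ?t"
  have ab': "a < b" "b < a + period k" using ab unfolding okp_def by auto
  have tw: "?t i = (if i = a then b else if i = b then a else i)" if "i \<in> ?W" for i
    using tr_window[OF ab] that by auto
  have tt: "?t (?t i) = i" for i using tr_invol[OF okp_mod_neq[OF ab]] .
  have tW: "?t i \<in> ?W" if "i \<in> ?W" for i using tw[OF that] that ab' by auto
  have tW': "i \<in> ?W" if "?t i \<in> ?W" for i using tW[OF that] tt[of i] by simp
  have \<sigma>\<sigma>: "?\<sigma> (?\<sigma> x) = x" for x by (cases x) (simp add: tt)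
  have mem: "?\<sigma> x \<in> ?P \<longleftrightarrow> x \<in> (?P - Y) \<union> prod.swap ` Y" for x
  proof (cases "fst x \<in> ?W \<and> snd x \<in> ?W")
    case True
    then show ?thesis
      unfolding inv_pairs_def Y_def using tw[of "fst x"] tw[of "snd x"] ab'
      by (cases x) (auto simp: image_iff)
  next
    case False
    moreover have "Y \<subseteq> ?P" unfolding Y_def inv_pairs_def using ab' by auto
    ultimately have "?\<sigma> x \<notin> ?P" "x \<notin> ?P" "x \<notin> prod.swap ` Y"
      using tW'[of "fst x"] tW'[of "snd x"] unfolding inv_pairs_def by (cases x; force)+
    then show ?thesis by blast
  qed
  have "?\<sigma> ` ?P = {x. ?\<sigma> x \<in> ?P}"
  proof (intro set_eqI iffI)
    fix x assume "x \<in> {x. ?\<sigma> x \<in> ?P}"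
    then show "x \<in> ?\<sigma> ` ?P" using \<sigma>\<sigma>[of x] by (metis image_eqI mem_Collect_eq)
  qed (auto simp: tt)
  then show ?thesis using mem by auto
qed

text \<open>Right multiplication by \<open>tr k a b\<close> only reverses the pairs in \<open>Y\<close>, and reversing a pair
  changes its weight by a sign.\<close>

lemma inv_count_comp_tr:
  assumes u: "u \<in> affW k" and ab: "okp k a b"
  shows "inv_count k (u \<circ> tr k a b) a =
    inv_count k u a + asc_sign u a b + (\<Sum>i\<in>{a<..<b}. asc_sign u a i + asc_sign u i b)"
proof -
  let ?t = "tr k a b" and ?P = "inv_pairs k a"
  let ?w = "\<lambda>(i, j). \<bar>(u j - u i) div period k\<bar>"
  define \<sigma> where "\<sigma> = map_prod ?t ?t"
  define Y where "Y = {(p, q). (p = a \<and> a < q \<and> q \<le> b) \<or> (q = b \<and> a < p \<and> p < b)}"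
  have ab': "a < b" "b < a + period k" using ab unfolding okp_def by auto
  have img: "\<sigma> ` ?P = (?P - Y) \<union> prod.swap ` Y"
    unfolding \<sigma>_def Y_def by (rule tr_image_inv_pairs[OF ab])
  have "\<sigma> (\<sigma> x) = x" for x unfolding \<sigma>_def using tr_invol[OF okp_mod_neq[OF ab]] by (cases x) simp
  then have inj: "inj \<sigma>" by (metis injI)
  have YP: "Y \<subseteq> ?P" unfolding Y_def inv_pairs_def using ab' by auto
  have fin: "finite Y" using finite_subset[OF YP finite_inv_pairs] .
  have "inv_count k (u \<circ> ?t) a = (\<Sum>x\<in>?P. ?w (\<sigma> x))"
    unfolding inv_count_def \<sigma>_def by (intro sum.cong) auto
  also have "\<dots> = sum ?w (\<sigma> ` ?P)"
    using sum.reindex[of \<sigma> ?P ?w] inj_on_subset[OF inj subset_UNIV] by simp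
  also have "\<dots> = sum ?w ?P - sum ?w Y + sum ?w (prod.swap ` Y)"
    unfolding img using fin finite_inv_pairs YP
    by (subst sum.union_disjoint) (auto simp: sum_diff Y_def inv_pairs_def)
  also have "\<dots> = inv_count k u a + (\<Sum>(p, q)\<in>Y. asc_sign u p q)"
  proof -
    have "sum ?w (prod.swap ` Y) = (\<Sum>(p, q)\<in>Y. ?w (q, p))"
      by (subst sum.reindex) (auto simp: inj_on_def case_prod_unfold)
    moreover have "?w (q, p) - ?w (p, q) = asc_sign u p q" if "(p, q) \<in> Y" for p q
      using that YP abs_div_period_swap[OF u, of p q] mod_period_neq[of p q k]
      unfolding inv_pairs_def by auto
    ultimately have "sum ?w (prod.swap ` Y) - sum ?w Y = (\<Sum>(p, q)\<in>Y. asc_sign u p q)"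
      by (auto simp: sum_subtractf[symmetric] intro!: sum.cong)
    then show ?thesis unfolding inv_count_def by simp
  qed
  also have "(\<Sum>(p, q)\<in>Y. asc_sign u p q) = asc_sign u a b + (\<Sum>i\<in>{a<..<b}. asc_sign u a i + asc_sign u i b)"
  proof -
    have "Y = insert (a, b) (Pair a ` {a<..<b} \<union> (\<lambda>i. (i, b)) ` {a<..<b})"
      unfolding Y_def using ab' by auto
    moreover have "Pair a ` {a<..<b} \<inter> (\<lambda>i. (i, b)) ` {a<..<b} = {}" by auto
    ultimately show ?thesis
      by (simp add: sum.union_disjoint sum.reindex inj_on_def sum.distrib image_iff)
  qed
  finally show ?thesis by (simp add: comp_def add.assoc)
qed

definition empty_rect :: "(int \<Rightarrow> int) \<Rightarrow> int \<Rightarrow> int \<Rightarrow> bool" where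
  "empty_rect u a b \<longleftrightarrow> (\<forall>i\<in>{a<..<b}. u i \<notin> {u a<..<u b})"

lemma inv_count_comp_tr_eq_Suc_iff:
  assumes u: "u \<in> affW k" and ab: "okp k a b"
  shows "inv_count k (u \<circ> tr k a b) a = inv_count k u a + 1 \<longleftrightarrow> u a < u b \<and> empty_rect u a b"
proof -
  let ?T = "\<lambda>i. asc_sign u a i + asc_sign u i b"
  have neq: "u i \<noteq> u a" "u i \<noteq> u b" if "i \<in> {a<..<b}" for i
    using that injD[OF affW_inj[OF u]] by fastforce+
  show ?thesis
  proof (cases "u a < u b")
    case True
    have "?T i \<ge> 0" "?T i = 0 \<longleftrightarrow> u i \<notin> {u a<..<u b}" if "i \<in> {a<..<b}" for i
      using True neq[OF that] by (auto simp: asc_sign_def)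
    then have "sum ?T {a<..<b} = 0 \<longleftrightarrow> empty_rect u a b"
      unfolding empty_rect_def by (subst sum_nonneg_eq_0_iff) auto
    then show ?thesis
      using inv_count_comp_tr[OF u ab] True by (simp add: asc_sign_def)
  next
    case False
    have "?T i \<le> 0" if "i \<in> {a<..<b}" for i using False by (auto simp: asc_sign_def)
    then have "sum ?T {a<..<b} \<le> 0" by (rule sum_nonpos)
    then show ?thesis using inv_count_comp_tr[OF u ab] False by (simp add: asc_sign_def)
  qed
qed

lemma okp_Suc: "k \<ge> 1 \<Longrightarrow> okp k i (i + 1)"
  unfolding okp_def by simp

lemma inv_count_comp_sgen:
  assumes "k \<ge> 1" and "u \<in> affW k"
  shows "inv_count k (u \<circ> sgen k i) 1 = inv_count k u 1 + asc_sign u i (i + 1)"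
proof -
  have v: "u \<circ> sgen k i \<in> affW k" unfolding sgen_def using affW_comp_tr assms okp_Suc by blast
  have "{i<..<i + 1} = {}" by auto
  then have "inv_count k (u \<circ> sgen k i) i = inv_count k u i + asc_sign u i (i + 1)"
    using inv_count_comp_tr[OF assms(2) okp_Suc[OF assms(1)], of i] unfolding sgen_def by simp
  then show ?thesis using inv_count_shift[OF v, of i] inv_count_shift[OF assms(2), of i] by simp
qed

lemma foldr_comp_snoc: "foldr (\<circ>) (map f (xs @ [x])) id = foldr (\<circ>) (map f xs) id \<circ> f x"
  by (induction xs) auto

lemma word_affW_inv_count_le:
  assumes k: "k \<ge> 1"
  shows "foldr (\<circ>) (map (sgen k) ws) id \<in> affW k \<and>
    inv_count k (foldr (\<circ>) (map (sgen k) ws) id) 1 \<le> int (length ws)"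
proof (induction ws rule: rev_induct)
  case (snoc x xs)
  define v where "v = foldr (\<circ>) (map (sgen k) xs) id"
  have v: "v \<in> affW k" "inv_count k v 1 \<le> int (length xs)" using snoc.IH unfolding v_def by blast+
  then have "v \<circ> sgen k x \<in> affW k" unfolding sgen_def using affW_comp_tr k okp_Suc by blast
  moreover have "asc_sign v x (x + 1) \<le> 1" by (simp add: asc_sign_def)
  moreover have "int (length (xs @ [x])) = int (length xs) + 1" by simp
  ultimately show ?case
    unfolding foldr_comp_snoc v_def[symmetric] using inv_count_comp_sgen[OF k v(1), of x] v(2)
    by (intro conjI) linarith+
qed (use id_affW[of k] inv_count_id[of k 1] in \<open>simp add: id_def\<close>)

lemma affW_ascending_eq_id:
  assumes u: "u \<in> affW k" and asc: "\<And>i. u i < u (i + 1)"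
  shows "u = id"
proof -
  have mono: "u i < u j" if "i < j" for i j
    using that
  proof (induction j rule: int_gr_induct)
    case (step j)
    then show ?case using asc[of j] by simp
  qed (use asc in simp)
  have surj: "surj u" using u unfolding affW_def bij_def by auto
  have step: "u (i + 1) = u i + 1" for i
  proof (rule ccontr)
    assume "u (i + 1) \<noteq> u i + 1"
    then have gap: "u i + 1 < u (i + 1)" using asc[of i] by simp
    obtain j where j: "u j = u i + 1" using surj by (metis surjD)
    have "j \<le> i \<or> i + 1 \<le> j" by linarith
    then have "u j \<le> u i \<or> u (i + 1) \<le> u j" using mono[of j i] mono[of "i + 1" j] by force
    then show False using j gap by simp
  qed
  have form: "u i - i = u 0" for i
  proof (induction i rule: int_induct[of _ 0])
    case (step1 i)
    then show ?case using step[of i] by linarith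
  next
    case (step2 i)
    then show ?case using step[of "i - 1"] by simp
  qed simp
  have "window_sum k u 1 = (\<Sum>i\<in>{1..<1 + period k}. u 0)"
    unfolding window_sum_def using form by (intro sum.cong) auto
  then have "u 0 = 0" using u unfolding affW_iff_window_sum by simp
  then show ?thesis using form by (auto simp: fun_eq_iff)
qed

lemma affW_ascending:
  assumes u: "u \<in> affW k" and asc: "\<And>i. i \<in> {0..int k} \<Longrightarrow> u i < u (i + 1)"
  shows "u i < u (i + 1)"
proof -
  define r where "r = i mod period k"
  have "r \<in> {0..int k}" unfolding r_def using pos_mod_bound[of "period k" i] by simp
  then have "u r < u (r + 1)" by (rule asc)
  moreover have "i = r + (i div period k) * period k"
    unfolding r_def using mod_div_mult_eq[of i "period k"] by linarith
  ultimately show ?thesis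
    using affW_shift[OF u, of r "i div period k"] affW_shift[OF u, of "r + 1" "i div period k"]
    by (simp add: algebra_simps)
qed

text \<open>Every element is a word of length \<open>inv_count\<close>: strip a descent among \<open>0, \<dots>, k\<close> as long as
  there is one; without such a descent the permutation is increasing, hence the identity.\<close>

lemma word_exists:
  assumes k: "k \<ge> 1" and u: "u \<in> affW k"
  shows "\<exists>ws. length ws = nat (inv_count k u 1) \<and> set ws \<subseteq> {0..int k} \<and>
    u = foldr (\<circ>) (map (sgen k) ws) id"
  using u
proof (induction "nat (inv_count k u 1)" arbitrary: u rule: less_induct)
  case less
  note u = less.prems
  show ?case
  proof (cases "\<exists>i\<in>{0..int k}. u (i + 1) < u i")
    case True
    then obtain i where i: "i \<in> {0..int k}" "u (i + 1) < u i" by blast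
    let ?v = "u \<circ> sgen k i"
    have v: "?v \<in> affW k" unfolding sgen_def using affW_comp_tr u k okp_Suc by blast
    have L: "inv_count k ?v 1 = inv_count k u 1 - 1"
      using inv_count_comp_sgen[OF k u, of i] i(2) by (simp add: asc_sign_def)
    then have lt: "nat (inv_count k ?v 1) < nat (inv_count k u 1)"
      using inv_count_nonneg[of k ?v 1] by simp
    obtain ws where ws: "length ws = nat (inv_count k ?v 1)" "set ws \<subseteq> {0..int k}"
      "?v = foldr (\<circ>) (map (sgen k) ws) id"
      using less.hyps[OF lt v] by blast
    have "u = ?v \<circ> sgen k i"
      unfolding sgen_def using tr_invol[OF okp_mod_neq[OF okp_Suc[OF k]]] by (auto simp: fun_eq_iff)
    then have "u = foldr (\<circ>) (map (sgen k) (ws @ [i])) id" unfolding foldr_comp_snoc ws(3)[symmetric] .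
    then show ?thesis using ws L inv_count_nonneg[of k ?v 1] i(1)
      by (intro exI[of _ "ws @ [i]"]) auto
  next
    case False
    have "u i < u (i + 1)" if "i \<in> {0..int k}" for i
    proof -
      have "u i \<noteq> u (i + 1)" using inj_eq[OF affW_inj[OF u], of i "i + 1"] by simp
      moreover have "\<not> u (i + 1) < u i" using False that by blast
      ultimately show ?thesis by linarith
    qed
    then have "u = id" by (rule affW_ascending_eq_id[OF u affW_ascending[OF u]])
    then show ?thesis by (intro exI[of _ "[]"]) (simp add: inv_count_id)
  qed
qed

lemma clen_eq_inv_count:
  assumes k: "k \<ge> 1" and u: "u \<in> affW k"
  shows "clen k u = nat (inv_count k u 1)"
  unfolding clen_def
proof (rule Least_equality)
  fix n assume "\<exists>ws. length ws = n \<and> set ws \<subseteq> {0..int k} \<and> u = foldr (\<circ>) (map (sgen k) ws) id"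
  then show "nat (inv_count k u 1) \<le> n" using word_affW_inv_count_le[OF k] by (auto simp: nat_le_iff)
qed (rule word_exists[OF k u])

lemma clen_comp_tr_eq_Suc_iff:
  assumes k: "k \<ge> 1" and u: "u \<in> affW k" and ab: "okp k a b"
  shows "clen k (u \<circ> tr k a b) = clen k u + 1 \<longleftrightarrow> u a < u b \<and> empty_rect u a b"
proof -
  have v: "u \<circ> tr k a b \<in> affW k" by (rule affW_comp_tr[OF u ab])
  have "clen k (u \<circ> tr k a b) = nat (inv_count k (u \<circ> tr k a b) a)" "clen k u = nat (inv_count k u a)"
    using clen_eq_inv_count[OF k v] clen_eq_inv_count[OF k u] inv_count_shift[OF v, of a]
      inv_count_shift[OF u, of a] by simp_all
  then show ?thesis
    using inv_count_nonneg[of k u a] inv_count_nonneg[of k "u \<circ> tr k a b" a]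
      inv_count_comp_tr_eq_Suc_iff[OF u ab] by linarith
qed

definition acts :: "(int \<Rightarrow> int) \<Rightarrow> int \<Rightarrow> int \<Rightarrow> bool" where
  "acts u a b \<longleftrightarrow> u a \<le> 0 \<and> 0 < u b \<and> empty_rect u a b"

lemma tbas_eq:
  assumes "k \<ge> 1" and "u \<in> affW k" and "okp k a b"
  shows "tbas k a b u = (if acts u a b then Some (u \<circ> tr k a b) else None)"
  using clen_comp_tr_eq_Suc_iff[OF assms] unfolding tbas_def acts_def by auto

text \<open>\<open>tact k a b\<close> is \<open>t_ab\<close> on basis elements and zero, with \<open>None\<close> standing for \<open>0\<close>.\<close>

definition tact :: "nat \<Rightarrow> int \<Rightarrow> int \<Rightarrow> (int \<Rightarrow> int) option \<Rightarrow> (int \<Rightarrow> int) option" where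
  "tact k a b x = Option.bind x (tbas k a b)"

lemma tact_None [simp]: "tact k a b None = None"
  by (simp add: tact_def)

lemma tact_Some:
  assumes "k \<ge> 1" and "u \<in> affW k" and "okp k a b"
  shows "tact k a b (Some u) = (if acts u a b then Some (u \<circ> tr k a b) else None)"
  using tbas_eq[OF assms] by (simp add: tact_def)

lemma tact_tact_Some:
  assumes k: "k \<ge> 1" and u: "u \<in> affW k" and "okp k a b" "okp k c d"
  shows "tact k c d (tact k a b (Some u)) =
    (if acts u a b \<and> acts (u \<circ> tr k a b) c d then Some (u \<circ> tr k a b \<circ> tr k c d) else None)"
  using tact_Some[OF k u assms(3)] tact_Some[OF k affW_comp_tr[OF u assms(3)] assms(4)] by simp

lemma tact_tact_tact_Some:
  assumes k: "k \<ge> 1" and u: "u \<in> affW k" and "okp k a b" "okp k c d" "okp k e f"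
  shows "tact k e f (tact k c d (tact k a b (Some u))) =
    (if acts u a b \<and> acts (u \<circ> tr k a b) c d \<and> acts (u \<circ> tr k a b \<circ> tr k c d) e f
     then Some (u \<circ> tr k a b \<circ> tr k c d \<circ> tr k e f) else None)"
  using tact_tact_Some[OF k u assms(3,4)]
    tact_Some[OF k affW_comp_tr[OF affW_comp_tr[OF u assms(3)] assms(4)] assms(5)] by simp

definition zw_of :: "(int \<Rightarrow> int) option \<Rightarrow> zw" where
  "zw_of x = (case x of None \<Rightarrow> zw_zero | Some u \<Rightarrow> basis u)"

lemma zw_of_Some: "zw_of (Some u) = basis u"
  and zw_of_None: "zw_of None = zw_zero"
  by (simp_all add: zw_of_def)

lemma zw_of_inject: "zw_of x = zw_of y \<longleftrightarrow> x = y"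
proof
  assume h: "zw_of x = zw_of y"
  show "x = y"
  proof (cases x; cases y)
    fix u v assume "x = Some u" "y = Some v"
    then show "x = y" using fun_cong[OF h, of u] by (auto simp: zw_of_def basis_def split: if_splits)
  next
    fix v assume "x = None" "y = Some v"
    then show "x = y" using fun_cong[OF h, of v] by (simp add: zw_of_def basis_def zw_zero_def)
  next
    fix u assume "x = Some u" "y = None"
    then show "x = y" using fun_cong[OF h, of u] by (simp add: zw_of_def basis_def zw_zero_def)
  qed simp
qed simp

lemma topr_basis: "topr k a b (basis u) = zw_of (tbas k a b u)"
proof
  fix w
  have "{v. basis u v \<noteq> 0 \<and> tbas k a b v = Some w} = (if tbas k a b u = Some w then {u} else {})"
    unfolding basis_def by auto
  then show "topr k a b (basis u) w = zw_of (tbas k a b u) w"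
    unfolding topr_def by (cases "tbas k a b u") (auto simp: zw_of_def basis_def zw_zero_def)
qed

lemma topr_zw_of: "topr k a b (zw_of x) = zw_of (tact k a b x)"
proof (cases x)
  case None
  then show ?thesis by (simp add: zw_of_None tact_def topr_def zw_zero_def fun_eq_iff)
qed (simp add: zw_of_Some tact_def topr_basis)

section \<open>The mirror symmetry\<close>

lemma mod_one_minus_iff: "(1 - x) mod m = y mod m \<longleftrightarrow> x mod m = (1 - y) mod m" for x y m :: int
proof -
  have "(1 - x) - y = - (x - (1 - y))" by simp
  then show ?thesis unfolding mod_eq_dvd_iff by (metis dvd_minus_iff)
qed

definition mirror :: "(int \<Rightarrow> int) \<Rightarrow> int \<Rightarrow> int" where
  "mirror u i = 1 - u (1 - i)"

lemma mirror_mirror [simp]: "mirror (mirror u) = u"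
  by (simp add: mirror_def fun_eq_iff)

lemma mirror_comp: "mirror (u \<circ> v) = mirror u \<circ> mirror v"
  by (simp add: mirror_def fun_eq_iff)

lemma mirror_tr:
  assumes "a mod period k \<noteq> b mod period k"
  shows "mirror (tr k a b) = tr k (1 - b) (1 - a)"
proof
  fix i
  have ia: "(1 - i) mod period k = a mod period k \<longleftrightarrow> i mod period k = (1 - a) mod period k"
    and ib: "(1 - i) mod period k = b mod period k \<longleftrightarrow> i mod period k = (1 - b) mod period k"
    by (rule mod_one_minus_iff)+
  have ba: "(1 - b) mod period k \<noteq> (1 - a) mod period k"
    using assms mod_one_minus_iff[of "1 - b" "period k" a] by simp
  consider "i mod period k = (1 - b) mod period k" | "i mod period k = (1 - a) mod period k"
    | "i mod period k \<noteq> (1 - b) mod period k" "i mod period k \<noteq> (1 - a) mod period k"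
    by blast
  then show "mirror (tr k a b) i = tr k (1 - b) (1 - a) i"
  proof cases
    case 1
    then show ?thesis using ib assms by (simp add: mirror_def tr_left tr_right)
  next
    case 2
    then show ?thesis using ia ba by (simp add: mirror_def tr_left tr_right)
  next
    case 3
    then show ?thesis using ia ib by (simp add: mirror_def tr_other)
  qed
qed

lemma okp_mirror: "okp k (1 - b) (1 - a) \<longleftrightarrow> okp k a b"
  unfolding okp_def by auto

lemma mirror_affW:
  assumes u: "u \<in> affW k"
  shows "mirror u \<in> affW k"
proof -
  have neg: "bij (\<lambda>i::int. 1 - i)" by (rule o_bij[of "\<lambda>i. 1 - i"]) (auto simp: fun_eq_iff)
  have "mirror u = (\<lambda>i. 1 - i) \<circ> u \<circ> (\<lambda>i. 1 - i)" by (simp add: mirror_def fun_eq_iff)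
  then have "bij (mirror u)" using u neg unfolding affW_def by (auto intro: bij_comp)
  moreover have per: "mirror u (i + period k) = mirror u i + period k" for i
    using affW_shift_diff[OF u, of "1 - i" 1] by (simp add: mirror_def algebra_simps)
  moreover have "window_sum k (mirror u) 1 = (\<Sum>j\<in>{1 - period k..<1}. j - u j)"
    unfolding window_sum_def mirror_def
    by (rule sum.reindex_bij_witness[of _ "\<lambda>j. 1 - j" "\<lambda>j. 1 - j"]) auto
  then have "window_sum k (mirror u) 1 = - window_sum k u (1 - period k)"
    unfolding window_sum_def by (simp add: sum_negf[symmetric])
  ultimately show ?thesis
    using u window_sum_shift[of u k "1 - period k"] affW_shift[OF u, of _ 1]
    unfolding affW_iff_window_sum by simp
qed

lemma mirror_word:
  assumes "k \<ge> 1"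
  shows "mirror (foldr (\<circ>) (map (sgen k) ws) id) =
    foldr (\<circ>) (map (sgen k) (map (\<lambda>i. (- i) mod period k) ws)) id"
proof (induction ws)
  case (Cons i ws)
  have "mirror (sgen k i) = tr k (- i) (1 - i)"
    unfolding sgen_def using mirror_tr okp_mod_neq[OF okp_Suc[OF assms]] by simp
  also have "\<dots> = sgen k ((- i) mod period k)"
    unfolding sgen_def by (rule tr_cong) (simp_all add: mod_add_left_eq)
  finally have s: "mirror (sgen k i) = sgen k ((- i) mod period k)" .
  have c: "foldr (\<circ>) (f # fs) id = f \<circ> foldr (\<circ>) fs id" for f :: "int \<Rightarrow> int" and fs by simp
  show ?case unfolding list.map c mirror_comp Cons.IH s ..
qed (simp add: mirror_def)

lemma clen_mirror:
  assumes "k \<ge> 1"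
  shows "clen k (mirror u) = clen k u"
proof -
  let ?W = "\<lambda>u n. \<exists>ws. length ws = n \<and> set ws \<subseteq> {0..int k} \<and> u = foldr (\<circ>) (map (sgen k) ws) id"
  have W: "?W (mirror v) n" if h: "?W v n" for v n
  proof -
    obtain ws where "length ws = n" "set ws \<subseteq> {0..int k}" "v = foldr (\<circ>) (map (sgen k) ws) id"
      using h by blast
    moreover have "(- i) mod period k \<in> {0..int k}" for i
      using pos_mod_bound[of "period k" "- i"] by simp
    ultimately show ?thesis using mirror_word[OF assms, of ws]
      by (intro exI[of _ "map (\<lambda>i. (- i) mod period k) ws"]) auto
  qed
  have "?W (mirror u) n \<longleftrightarrow> ?W u n" for n
    using W[where v = u and n = n] W[where v = "mirror u" and n = n] unfolding mirror_mirror by blast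
  then show ?thesis unfolding clen_def by simp
qed

lemma tbas_mirror:
  assumes "k \<ge> 1" and "okp k a b"
  shows "tbas k (1 - b) (1 - a) (mirror u) = map_option mirror (tbas k a b u)"
proof -
  have "mirror u \<circ> tr k (1 - b) (1 - a) = mirror (u \<circ> tr k a b)"
    using mirror_tr[OF okp_mod_neq[OF assms(2)]] by (simp add: mirror_comp)
  moreover have "mirror u (1 - b) \<le> 0 \<longleftrightarrow> 0 < u b" "0 < mirror u (1 - a) \<longleftrightarrow> u a \<le> 0"
    by (auto simp: mirror_def)
  ultimately show ?thesis
    unfolding tbas_def using clen_mirror[OF assms(1)] by auto
qed

lemma tact_mirror:
  assumes "k \<ge> 1" and "okp k a b"
  shows "tact k (1 - b) (1 - a) (map_option mirror x) = map_option mirror (tact k a b x)"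
  by (cases x) (simp_all add: tact_def tbas_mirror[OF assms])

lemma tact_mirror_Some:
  assumes "k \<ge> 1" and "okp k a b"
  shows "tact k (1 - b) (1 - a) (Some (mirror u)) = map_option mirror (tact k a b (Some u))"
  using tact_mirror[OF assms, of "Some u"] by simp

lemma map_option_mirror_inject: "map_option mirror x = map_option mirror y \<longleftrightarrow> x = y"
  by (cases x; cases y) (auto, metis mirror_mirror)

section \<open>Commuting operators\<close>

lemma empty_rect_shift:
  assumes u: "u \<in> affW k"
  shows "empty_rect u (a + m * period k) (b + m * period k) \<longleftrightarrow> empty_rect u a b"
proof -
  have "(\<forall>i\<in>{a + s<..<b + s}. P i) \<longleftrightarrow> (\<forall>i\<in>{a<..<b}. P (i + s))" for P and s :: int
  proof
    assume h: "\<forall>i\<in>{a<..<b}. P (i + s)"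
    show "\<forall>i\<in>{a + s<..<b + s}. P i"
    proof
      fix i assume "i \<in> {a + s<..<b + s}"
      then show "P i" using h[rule_format, of "i - s"] by simp
    qed
  qed auto
  then show ?thesis unfolding empty_rect_def by (simp add: affW_shift[OF u])
qed

text \<open>A point of \<open>u\<close> in the rectangle of \<open>(c, d)\<close> is a translate of the point at \<open>a\<close> or \<open>b\<close>; then
  either \<open>t_ab\<close> moves a point of \<open>u \<circ> t_ab\<close> into that rectangle, or \<open>c\<close> or \<open>d\<close> gives a point in a
  translate of the empty rectangle of \<open>(a, b)\<close>.\<close>

lemma empty_rect_of_comp_tr:
  assumes u: "u \<in> affW k" and ab: "okp k a b"
    and cl: "a mod period k \<noteq> c mod period k" "a mod period k \<noteq> d mod period k"
      "b mod period k \<noteq> c mod period k" "b mod period k \<noteq> d mod period k"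
    and uab: "u a < u b" and Eab: "empty_rect u a b" and Ev: "empty_rect (u \<circ> tr k a b) c d"
  shows "empty_rect u c d"
  unfolding empty_rect_def
proof (intro ballI notI)
  fix i assume i: "i \<in> {c<..<d}" and ui: "u i \<in> {u c<..<u d}"
  let ?t = "tr k a b"
  have vc: "?t c = c" "?t d = d" using cl by (simp_all add: tr_other)
  have Ev': "u (?t j) \<notin> {u c<..<u d}" if "j \<in> {c<..<d}" for j
    using Ev that vc unfolding empty_rect_def by auto
  have inj: "u x = u y \<longleftrightarrow> x = y" for x y using affW_inj[OF u] by (auto dest: injD)
  consider m where "i = a + m * period k" | m where "i = b + m * period k"
    | "i mod period k \<noteq> a mod period k" "i mod period k \<noteq> b mod period k"
    using mod_period_eq_iff by metis
  then show False
  proof cases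
    case (1 m)
    let ?j = "b + m * period k"
    have "u (?t i) = u b + m * period k" using 1 by (simp add: tr_left_shift affW_shift[OF u])
    then have ud: "u d < u b + m * period k"
      using Ev'[OF i] ui uab inj[of d "b + m * period k"] cl(4) 1 affW_shift[OF u] by force
    have "u (?t ?j) = u i" using 1 okp_mod_neq[OF ab] by (simp add: tr_right_shift)
    then have "?j \<notin> {c<..<d}" using Ev'[of ?j] ui by auto
    moreover have "?j \<noteq> d" using cl(4) by auto
    ultimately have "d < ?j" using i 1 ab unfolding okp_def by auto
    then show False
      using ud Eab[folded empty_rect_shift[OF u, of a m b]] i ui 1 affW_shift[OF u]
      unfolding empty_rect_def by force
  next
    case (2 m)
    let ?j = "a + m * period k"
    have "u (?t i) = u a + m * period k" using 2 okp_mod_neq[OF ab] by (simp add: tr_right_shift affW_shift[OF u])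
    then have uc: "u a + m * period k < u c"
      using Ev'[OF i] ui uab inj[of c "a + m * period k"] cl(1) 2 affW_shift[OF u] by force
    have "u (?t ?j) = u i" using 2 by (simp add: tr_left_shift)
    then have "?j \<notin> {c<..<d}" using Ev'[of ?j] ui by auto
    moreover have "?j \<noteq> c" using cl(1) by auto
    ultimately have "?j < c" using i 2 ab unfolding okp_def by auto
    then show False
      using uc Eab[folded empty_rect_shift[OF u, of a m b]] i ui 2 affW_shift[OF u]
      unfolding empty_rect_def by force
  next
    case 3
    then show False using Ev'[OF i] ui by (simp add: tr_other)
  qed
qed

text \<open>A point of \<open>u \<circ> t_cd\<close> in the rectangle of \<open>(a, b)\<close> comes from a translate of \<open>c\<close> or \<open>d\<close>;
  the matching translate of \<open>b\<close> or \<open>a\<close> then gives a point of \<open>u \<circ> t_ab\<close> in the rectangle of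
  \<open>(c, d)\<close>.\<close>

lemma empty_rect_comp_tr_swap:
  assumes u: "u \<in> affW k" and ab: "okp k a b" and cd: "okp k c d"
    and cl: "a mod period k \<noteq> c mod period k" "a mod period k \<noteq> d mod period k"
      "b mod period k \<noteq> c mod period k" "b mod period k \<noteq> d mod period k"
    and ucd: "u c < u d" and Eab: "empty_rect u a b" and Ev: "empty_rect (u \<circ> tr k a b) c d"
  shows "empty_rect (u \<circ> tr k c d) a b"
  unfolding empty_rect_def
proof (intro ballI notI)
  fix i assume i: "i \<in> {a<..<b}"
  let ?t = "tr k a b" and ?s = "tr k c d"
  have sa: "?s a = a" "?s b = b" "?t c = c" "?t d = d" using cl by (simp_all add: tr_other)
  assume "(u \<circ> ?s) i \<in> {(u \<circ> ?s) a<..<(u \<circ> ?s) b}"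
  then have usi: "u (?s i) \<in> {u a<..<u b}" using sa by simp
  have Eu: "u j \<notin> {u a<..<u b}" if "j \<in> {a<..<b}" for j using Eab that unfolding empty_rect_def by auto
  have Ev': "u (?t j) \<notin> {u c<..<u d}" if "j \<in> {c<..<d}" for j
    using Ev that sa unfolding empty_rect_def by auto
  have inj: "u x = u y \<longleftrightarrow> x = y" for x y using affW_inj[OF u] by (auto dest: injD)
  consider m where "i = c + m * period k" | m where "i = d + m * period k"
    | "i mod period k \<noteq> c mod period k" "i mod period k \<noteq> d mod period k"
    using mod_period_eq_iff by metis
  then show False
  proof cases
    case (1 m)
    have si: "u (?s i) = u d + m * period k" using 1 by (simp add: tr_left_shift affW_shift[OF u])
    have "u i < u a"
      using Eu[OF i] usi si ucd inj[of i a] 1 affW_shift[OF u] i by force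
    have "d + m * period k \<notin> {a<..<b}" using Eu usi si affW_shift[OF u] by force
    moreover have "d + m * period k \<noteq> b" using cl(4) by auto
    ultimately have "b < d + m * period k" using i 1 cd unfolding okp_def by auto
    then have "b + (- m) * period k \<in> {c<..<d}" using i 1 by auto
    moreover have "u (?t (b + (- m) * period k)) = u a + (- m) * period k"
      by (simp only: tr_right_shift[OF okp_mod_neq[OF ab]] affW_shift[OF u])
    ultimately show False using Ev' \<open>u i < u a\<close> usi si 1 affW_shift[OF u] by force
  next
    case (2 m)
    have si: "u (?s i) = u c + m * period k"
      using 2 okp_mod_neq[OF cd] by (simp add: tr_right_shift affW_shift[OF u])
    have "u b < u i"
      using Eu[OF i] usi si ucd inj[of i b] 2 affW_shift[OF u] i by force
    have "c + m * period k \<notin> {a<..<b}" using Eu usi si affW_shift[OF u] by force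
    moreover have "c + m * period k \<noteq> a" using cl(1) by auto
    ultimately have "c + m * period k < a" using i 2 cd unfolding okp_def by auto
    then have "a + (- m) * period k \<in> {c<..<d}" using i 2 by auto
    moreover have "u (?t (a + (- m) * period k)) = u b + (- m) * period k"
      by (simp only: tr_left_shift affW_shift[OF u])
    ultimately show False using Ev' \<open>u b < u i\<close> usi si 2 affW_shift[OF u] by force
  next
    case 3
    then show False using Eu[OF i] usi by (simp add: tr_other)
  qed
qed

lemma acts_comp_tr_swap:
  assumes u: "u \<in> affW k" and ab: "okp k a b" and cd: "okp k c d"
    and cl: "a mod period k \<noteq> c mod period k" "a mod period k \<noteq> d mod period k"
      "b mod period k \<noteq> c mod period k" "b mod period k \<noteq> d mod period k"
    and acts: "acts u a b" "acts (u \<circ> tr k a b) c d"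
  shows "acts u c d \<and> acts (u \<circ> tr k c d) a b"
proof -
  have "tr k a b c = c" "tr k a b d = d" "tr k c d a = a" "tr k c d b = b"
    using cl by (simp_all add: tr_other)
  then show ?thesis
    using acts empty_rect_of_comp_tr[OF u ab cl] empty_rect_comp_tr_swap[OF u ab cd cl]
    unfolding acts_def by auto
qed

lemma tact_comm:
  assumes k: "k \<ge> 1" and u: "u \<in> affW k" and ab: "okp k a b" and cd: "okp k c d"
    and cl: "a mod period k \<noteq> c mod period k" "a mod period k \<noteq> d mod period k"
      "b mod period k \<noteq> c mod period k" "b mod period k \<noteq> d mod period k"
  shows "tact k c d (tact k a b (Some u)) = tact k a b (tact k c d (Some u))"
proof -
  have "tr k a b \<circ> tr k c d = tr k c d \<circ> tr k a b"
    using tr_comm cl okp_mod_neq[OF ab] okp_mod_neq[OF cd] by blast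
  moreover have "acts u a b \<and> acts (u \<circ> tr k a b) c d \<longleftrightarrow> acts u c d \<and> acts (u \<circ> tr k c d) a b"
    using acts_comp_tr_swap[OF u ab cd cl] acts_comp_tr_swap[OF u cd ab] cl by metis
  ultimately show ?thesis
    unfolding tact_tact_Some[OF k u ab cd] tact_tact_Some[OF k u cd ab] by (simp add: comp_assoc)
qed

section \<open>Vanishing products\<close>

lemma tact_crossing_None:
  assumes k: "k \<ge> 1" and u: "u \<in> affW k" and ab: "okp k a b" and cd: "okp k c d"
    and r: "a < c" "c < b" "b < d"
  shows "tact k c d (tact k a b (Some u)) = None"
proof -
  let ?v = "u \<circ> tr k a b"
  have "c mod period k \<noteq> a mod period k" "c mod period k \<noteq> b mod period k"
    using mod_period_neq[of a c k] mod_period_neq[of c b k] ab r unfolding okp_def by auto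
  then have vc: "?v c = u c" by (simp add: tr_other)
  have vb: "?v b = u a" using okp_mod_neq[OF ab] by (simp add: tr_right_eq)
  have "\<not> (acts u a b \<and> acts ?v c d)"
  proof
    assume h: "acts u a b \<and> acts ?v c d"
    then have "u c \<notin> {u a<..<u b}" "u c \<noteq> u a" "u c \<le> 0" "0 < u b"
      using r vc injD[OF affW_inj[OF u], of c a] unfolding acts_def empty_rect_def by auto
    then have "u c < u a" by auto
    moreover have "?v b \<notin> {?v c<..<?v d}" "u a \<le> 0" "0 < ?v d"
      using h r unfolding acts_def empty_rect_def by auto
    ultimately show False using vb vc by auto
  qed
  then show ?thesis using tact_tact_Some[OF k u ab cd] by simp
qed

lemma tact_crossing_None_rev:
  assumes k: "k \<ge> 1" and u: "u \<in> affW k" and ab: "okp k a b" and cd: "okp k c d"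
    and r: "a < c" "c < b" "b < d"
  shows "tact k a b (tact k c d (Some u)) = None"
proof -
  have "tact k (1 - b) (1 - a) (tact k (1 - d) (1 - c) (Some (mirror u))) = None"
    using r ab cd okp_mirror by (intro tact_crossing_None[OF k mirror_affW[OF u]]) auto
  then show ?thesis by (simp only: tact_mirror_Some[OF k] tact_mirror[OF k] ab cd option.map_disc_iff)
qed

text \<open>The 0-grassmannian condition, in a form that is visibly invariant under the mirror.\<close>

definition grassmannian :: "nat \<Rightarrow> (int \<Rightarrow> int) \<Rightarrow> bool" where
  "grassmannian k u \<longleftrightarrow> (\<forall>p q. p < q \<longrightarrow> 1 \<le> u q \<longrightarrow> u p \<le> period k \<longrightarrow> u p < u q)"

lemma affW0_grassmannian:
  assumes u: "u \<in> affW0 k"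
  shows "grassmannian k u"
  unfolding grassmannian_def
proof (intro allI impI)
  fix p q assume pq: "p < q" "1 \<le> u q" "u p \<le> period k"
  show "u p < u q"
  proof (rule ccontr)
    assume "\<not> u p < u q"
    moreover have uW: "u \<in> affW k" using u unfolding affW0_def by simp
    ultimately have "u q < u p" using pq inj_eq[OF affW_inj[OF uW], of p q] by auto
    then have "inv u (u q) < inv u (u p)" using u pq unfolding affW0_def by auto
    then show False using pq affW_inj[OF uW] by (simp add: inv_f_f)
  qed
qed

lemma grassmannian_mirror:
  assumes u: "u \<in> affW k" and "grassmannian k u"
  shows "grassmannian k (mirror u)"
  unfolding grassmannian_def
proof (intro allI impI)
  fix p q assume "p < q" "1 \<le> mirror u q" "mirror u p \<le> period k"
  then show "mirror u p < mirror u q"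
    using assms(2)[unfolded grassmannian_def, rule_format, of "1 - q + 1 * period k" "1 - p + 1 * period k"]
    unfolding mirror_def affW_shift[OF u] by simp
qed

lemma tact_far_None:
  assumes k: "k \<ge> 1" and u: "u \<in> affW k"
    and g: "grassmannian k u"
    and ab: "okp k a b" and bd: "okp k b d" and far: "period k < d - a"
  shows "tact k b d (tact k a b (Some u)) = None"
proof -
  let ?v = "u \<circ> tr k a b" and ?a' = "a + 1 * period k" and ?d' = "d + (- 1) * period k"
  have r: "a < b" "b < ?a'" "?a' < d" "?d' < b" "a < ?d'"
    using ab bd far unfolding okp_def by auto
  have "d mod period k \<noteq> a mod period k" "d mod period k \<noteq> b mod period k"
    using mod_period_neq[of ?a' d k] mod_period_neq[of b d k] r bd unfolding okp_def by auto
  then have vd: "?v d = u d" by (simp add: tr_other)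
  have va: "?v ?a' = u b + period k" by (simp only: comp_apply tr_left_shift affW_shift[OF u]) simp
  have ua: "u ?a' = u a + period k" and ud: "u ?d' = u d - period k"
    by (simp_all only: affW_shift[OF u]) simp_all
  have vb: "?v b = u a" using okp_mod_neq[OF ab] by (simp add: tr_right_eq)
  have "\<not> (acts u a b \<and> acts ?v b d)"
  proof
    assume h: "acts u a b \<and> acts ?v b d"
    then have s: "u a \<le> 0" "0 < u b" "0 < u d" using vd unfolding acts_def by auto
    have "?v ?a' \<notin> {?v b<..<?v d}" "u ?d' \<notin> {u a<..<u b}"
      using h r unfolding acts_def empty_rect_def by auto
    moreover have "?v ?a' \<noteq> ?v d" "u ?d' \<noteq> u b"
      using r inj_eq[OF affW_inj[OF affW_comp_tr[OF u ab]], of ?a' d] inj_eq[OF affW_inj[OF u], of ?d' b]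
      by auto
    moreover have "u ?a' < u d" using g s r(3) ua unfolding grassmannian_def by fastforce
    ultimately show False using va vd vb ua ud s by auto
  qed
  then show ?thesis using tact_tact_Some[OF k u ab bd] by simp
qed

lemma tact_far_None_rev:
  assumes k: "k \<ge> 1" and u: "u \<in> affW k"
    and g: "grassmannian k u"
    and ab: "okp k a b" and bd: "okp k b d" and far: "period k < d - a"
  shows "tact k a b (tact k b d (Some u)) = None"
proof -
  have "tact k (1 - b) (1 - a) (tact k (1 - d) (1 - b) (Some (mirror u))) = None"
    using far ab bd okp_mirror grassmannian_mirror[OF u g]
    by (intro tact_far_None[OF k mirror_affW[OF u]]) auto
  then show ?thesis by (simp only: tact_mirror_Some[OF k] tact_mirror[OF k] ab bd option.map_disc_iff)
qed

lemma tact_same_left_None: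
  assumes k: "k \<ge> 1" and u: "u \<in> affW k" and ab: "okp k a b" and cd: "okp k c d"
    and ac: "a mod period k = c mod period k" and bd: "b \<le> d"
  shows "tact k c d (tact k a b (Some u)) = None"
proof -
  obtain m where m: "c = a + m * period k" using ac mod_period_eq_iff by blast
  have "\<not> (acts u a b \<and> acts (u \<circ> tr k a b) c d)"
  proof
    assume h: "acts u a b \<and> acts (u \<circ> tr k a b) c d"
    then have "u b + m * period k \<le> 0" "0 < u b"
      using m unfolding acts_def by (simp_all add: tr_left_shift affW_shift[OF u])
    then have "m * period k < 0" by linarith
    then have "m \<le> -1" by (simp add: mult_less_0_iff)
    then have "m * period k \<le> - period k" using mult_right_mono[of m "-1" "period k"] by simp
    then show False using m ab cd bd unfolding okp_def by linarith
  qed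
  then show ?thesis using tact_tact_Some[OF k u ab cd] by simp
qed

lemma tact_same_right_None:
  assumes k: "k \<ge> 1" and u: "u \<in> affW k" and ab: "okp k a b" and cd: "okp k c d"
    and bd: "b mod period k = d mod period k" and ca: "c \<le> a"
  shows "tact k c d (tact k a b (Some u)) = None"
proof -
  have "(1 - b) mod period k = (1 - d) mod period k"
    using bd mod_one_minus_iff[of b "period k" "1 - d"] by simp
  then have "tact k (1 - d) (1 - c) (tact k (1 - b) (1 - a) (Some (mirror u))) = None"
    using ca ab cd okp_mirror by (intro tact_same_left_None[OF k mirror_affW[OF u]]) auto
  then show ?thesis by (simp only: tact_mirror_Some[OF k] tact_mirror[OF k] ab cd option.map_disc_iff)
qed

lemma tact_triple_None:
  assumes k: "k \<ge> 1" and u: "u \<in> affW k" and ab: "okp k a b" and bc: "okp k b c"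
    and near: "c - a < period k"
  shows "tact k b c (tact k a b (tact k b c (Some u))) = None"
proof -
  have "c mod period k \<noteq> a mod period k" "c mod period k \<noteq> b mod period k"
    using mod_period_neq[of a c k] mod_period_neq[of b c k] ab bc near unfolding okp_def by auto
  then have "(u \<circ> tr k b c \<circ> tr k a b) c = u b" using okp_mod_neq[OF bc] by (simp add: tr_other tr_right_eq)
  then have "\<not> (acts u b c \<and> acts (u \<circ> tr k b c) a b \<and> acts (u \<circ> tr k b c \<circ> tr k a b) b c)"
    unfolding acts_def by auto
  then show ?thesis unfolding tact_tact_tact_Some[OF k u bc ab bc] by (rule if_not_P)
qed

lemma tact_triple_None_rev:
  assumes k: "k \<ge> 1" and u: "u \<in> affW k" and ab: "okp k a b" and bc: "okp k b c"
    and near: "c - a < period k"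
  shows "tact k a b (tact k b c (tact k a b (Some u))) = None"
proof -
  have "tact k (1 - b) (1 - a) (tact k (1 - c) (1 - b) (tact k (1 - b) (1 - a) (Some (mirror u)))) = None"
    using near ab bc okp_mirror by (intro tact_triple_None[OF k mirror_affW[OF u]]) auto
  then show ?thesis by (simp only: tact_mirror_Some[OF k] tact_mirror[OF k] ab bc option.map_disc_iff)
qed

text \<open>In both relations the two sides are products of equal transpositions, so the length
  conditions in \<open>tbas\<close> coincide and only the sign conditions need to be compared.\<close>

lemma tact_wrap:
  assumes u: "u \<in> affW k" and r: "d - a = period k" and ab: "okp k a b"
  shows "tact k b d (tact k a b (Some u)) = tact k (b - period k) a (tact k a b (Some u))"
proof (cases "tbas k a b u")
  case (Some v)
  then have v: "v = u \<circ> tr k a b" and s: "u a \<le> 0" "0 < u b" by (auto simp: tbas_def split: if_splits)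
  have d: "d = a + 1 * period k" using r by simp
  then have "tr k b d = tr k (b - period k) a" by (intro tr_cong) simp_all
  moreover have "v b = u a" "v a = u b" using v okp_mod_neq[OF ab] by (simp_all add: tr_left_eq tr_right_eq)
  moreover have "v (a + 1 * period k) = u b + period k"
    unfolding v comp_apply tr_left_shift affW_shift[OF u] by simp
  moreover have "b - period k = b + (- 1) * period k" by simp
  then have "v (b - period k) = u a - period k"
    by (simp only: v comp_apply tr_right_shift[OF okp_mod_neq[OF ab]] affW_shift[OF u])
  ultimately have "tbas k b d v = tbas k (b - period k) a v" using s d unfolding tbas_def by simp
  then show ?thesis using Some by (simp add: tact_def)
qed (simp add: tact_def)

lemma tact_wrap_pair:
  assumes u: "u \<in> affW k" and r: "b < c"
    and cl: "b mod period k = c mod period k" "d mod period k = a mod period k"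
    and len: "(b - a) + (d - c) = period k" and ab: "okp k a b"
  shows "tact k c d (tact k a b (Some u)) = tact k (b - period k) a (tact k (d - period k) c (Some u))"
proof -
  obtain m where m: "c = b + m * period k" using cl(1) mod_period_eq_iff by blast
  define e where "e = m * period k"
  have e: "e > 0" using r m e_def by simp
  have dN: "d - period k = a + m * period k" using len m by simp
  have "tr k (d - period k) c = tr k a b"
    by (rule tr_cong) (simp_all add: cl[symmetric] dN m)
  moreover have "tr k (b - period k) a = tr k c d"
    by (rule tr_cong) (use cl len in simp_all)
  moreover have "u (d - period k) = u a + e" "u c = u b + e"
    unfolding dN m e_def by (simp_all only: affW_shift[OF u])
  moreover have "u (tr k a b c) = u a + e"
  proof -
    have "tr k a b c = a + m * period k"
      using tr_right[OF okp_mod_neq[OF ab] cl(1)[symmetric]] m by simp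
    then show ?thesis unfolding e_def by (simp only: affW_shift[OF u])
  qed
  moreover have "u (tr k a b d) = u b + e + period k"
  proof -
    have "tr k a b d = b + (m + 1) * period k"
      using tr_left[OF cl(2)] len m by (simp add: algebra_simps)
    then show ?thesis unfolding e_def by (simp only: affW_shift[OF u]) (simp add: distrib_right)
  qed
  moreover have "u (tr k a b (b - period k)) = u a - period k"
  proof -
    have "tr k a b (b - period k) = a - period k"
      using tr_right[OF okp_mod_neq[OF ab], of "b - period k"] by simp
    then show ?thesis using affW_shift_diff[OF u, of a 1] by simp
  qed
  moreover have "u (tr k a b a) = u b" by (simp add: tr_left_eq)
  ultimately show ?thesis using e unfolding tact_def tbas_def by auto
qed

section \<open>Braid relations\<close>

lemma ball_greaterThanLessThan_split:
  fixes a b c :: int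
  assumes "a < b" "b < c"
  shows "(\<forall>i\<in>{a<..<c}. P i) \<longleftrightarrow> (\<forall>i\<in>{a<..<b}. P i) \<and> P b \<and> (\<forall>i\<in>{b<..<c}. P i)"
proof
  assume h: "(\<forall>i\<in>{a<..<b}. P i) \<and> P b \<and> (\<forall>i\<in>{b<..<c}. P i)"
  show "\<forall>i\<in>{a<..<c}. P i"
  proof
    fix i assume "i \<in> {a<..<c}"
    then consider "i \<in> {a<..<b}" | "i = b" | "i \<in> {b<..<c}" by fastforce
    then show "P i" using h by cases auto
  qed
qed (use assms in auto)

lemma not_in_intervals_swap:
  fixes x p q r s :: int
  assumes "p \<le> 0" "r \<le> 0" "0 < q" "q < s"
  shows "x \<notin> {p<..<s} \<and> x \<notin> {r<..<q} \<longleftrightarrow> x \<notin> {p<..<q} \<and> x \<notin> {r<..<s}"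
  using assms by auto

lemma tact_braid:
  assumes k: "k \<ge> 1" and u: "u \<in> affW k"
    and r: "a < b" "b < c" "c < d" "c - a \<le> int k" "d - b \<le> int k"
  shows "tact k a c (tact k c d (tact k b c (Some u))) = tact k b c (tact k a b (tact k b d (Some u)))"
proof -
  have ab: "okp k a b" and bc: "okp k b c" and cd: "okp k c d" and ac: "okp k a c" and bd: "okp k b d"
    using r unfolding okp_def by auto
  note cl = okp_mod_neq[OF ab] okp_mod_neq[OF bc] okp_mod_neq[OF cd] okp_mod_neq[OF ac] okp_mod_neq[OF bd]
  let ?v1 = "u \<circ> tr k b c" and ?w1 = "u \<circ> tr k b d" and ?w2 = "u \<circ> tr k b d \<circ> tr k a b"
  have bcd: "tr k b c \<circ> tr k c d = tr k b d \<circ> tr k b c"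
    using tr_conj[of b k c d] comp_tr_tr[of b k c] cl by (metis comp_assoc)
  have bca: "tr k b c \<circ> tr k a c = tr k a b \<circ> tr k b c"
    using tr_conj[of b k c a] comp_tr_tr[of b k c] tr_swap[of a k c] tr_swap[of a k b] cl by (metis comp_assoc)
  have v2_eq: "?v1 \<circ> tr k c d = ?w1 \<circ> tr k b c" using bcd by (simp add: comp_assoc)
  have perm: "?v1 \<circ> tr k c d \<circ> tr k a c = ?w2 \<circ> tr k b c" using bcd bca by (simp add: comp_assoc)
  define \<alpha> where "\<alpha> = ?w1 a"
  have nb: "i mod period k \<noteq> b mod period k" "i mod period k \<noteq> c mod period k"
    "i mod period k \<noteq> d mod period k" "i mod period k \<noteq> a mod period k" if "i \<in> {b<..<c}" for i
    using that r mod_period_neq[of b i k] mod_period_neq[of i c k] mod_period_neq[of i d k]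
      mod_period_neq[of a i k] by auto
  have nc: "i mod period k \<noteq> b mod period k" "i mod period k \<noteq> c mod period k" if "i \<in> {c<..d}" for i
    using that r mod_period_neq[of b i k] mod_period_neq[of c i k] by auto
  have v1: "?v1 c = u b" "?v1 d = u d" "\<forall>i\<in>{c<..<d}. ?v1 i = u i"
    using cl nc by (auto simp: tr_right_eq tr_other)
  have w1: "?w1 b = u d" "?w1 c = u c" "\<forall>i\<in>{b<..<c}. ?w1 i = u i"
    using cl nb by (auto simp: tr_left_eq tr_other)
  have v2: "(?v1 \<circ> tr k c d) a = \<alpha>" "(?v1 \<circ> tr k c d) b = u c" "(?v1 \<circ> tr k c d) c = u d"
    "\<forall>i\<in>{a<..<b}. (?v1 \<circ> tr k c d) i = ?w1 i" "\<forall>i\<in>{b<..<c}. (?v1 \<circ> tr k c d) i = u i"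
    unfolding v2_eq \<alpha>_def using cl w1 nb r mod_period_neq[of _ b k] mod_period_neq[of _ c k]
    by (auto simp: tr_left_eq tr_right_eq tr_other)
  have w2: "?w2 b = \<alpha>" "?w2 c = u c" "\<forall>i\<in>{b<..<c}. ?w2 i = u i"
    unfolding \<alpha>_def using cl w1 nb by (auto simp: tr_right_eq tr_other)
  let ?between = "\<lambda>x y. \<forall>i\<in>{b<..<c}. u i \<notin> {u b<..<x} \<and> u i \<notin> {\<alpha><..<y}"
  let ?common = "u b \<le> 0 \<and> 0 < u c \<and> 0 < u d \<and> \<alpha> \<le> 0 \<and>
    (\<forall>i\<in>{a<..<b}. ?w1 i \<notin> {\<alpha><..<u d}) \<and> (\<forall>i\<in>{c<..<d}. u i \<notin> {u b<..<u d})"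
  have L: "acts u b c \<and> acts ?v1 c d \<and> acts (?v1 \<circ> tr k c d) a c \<longleftrightarrow>
      ?common \<and> u c \<notin> {\<alpha><..<u d} \<and> ?between (u c) (u d)"
    unfolding acts_def empty_rect_def ball_greaterThanLessThan_split[OF r(1) r(2)] using v1 v2 by auto
  have R: "acts u b d \<and> acts ?w1 a b \<and> acts ?w2 b c \<longleftrightarrow>
      ?common \<and> u c \<notin> {u b<..<u d} \<and> ?between (u d) (u c)"
    unfolding acts_def empty_rect_def ball_greaterThanLessThan_split[OF r(2) r(3)] \<alpha>_def[symmetric]
    using w1 w2 by auto
  \<comment> \<open>each side forces \<open>u d < u c\<close>, and then the conditions on \<open>(b, c)\<close> agree\<close>
  have "u c \<noteq> u d" using inj_eq[OF affW_inj[OF u], of c d] r by simp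
  then have "acts u b c \<and> acts ?v1 c d \<and> acts (?v1 \<circ> tr k c d) a c \<longleftrightarrow>
      acts u b d \<and> acts ?w1 a b \<and> acts ?w2 b c"
    unfolding L R using not_in_intervals_swap[of "u b" \<alpha> "u d" "u c"] by auto
  then show ?thesis
    unfolding tact_tact_tact_Some[OF k u bc cd ac] tact_tact_tact_Some[OF k u bd ab bc] perm by simp
qed

lemma tact_braid_rev:
  assumes k: "k \<ge> 1" and u: "u \<in> affW k"
    and r: "a < b" "b < c" "c < d" "c - a \<le> int k" "d - b \<le> int k"
  shows "tact k b c (tact k c d (tact k a c (Some u))) = tact k b d (tact k a b (tact k b c (Some u)))"
proof -
  have ok: "okp k a b" "okp k b c" "okp k c d" "okp k a c" "okp k b d"
    using r unfolding okp_def by auto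
  have "tact k (1 - d) (1 - b) (tact k (1 - b) (1 - a) (tact k (1 - c) (1 - b) (Some (mirror u)))) =
      tact k (1 - c) (1 - b) (tact k (1 - d) (1 - c) (tact k (1 - c) (1 - a) (Some (mirror u))))"
    using r by (intro tact_braid[OF k mirror_affW[OF u]]) auto
  then have "map_option mirror (tact k b d (tact k a b (tact k b c (Some u)))) =
      map_option mirror (tact k b c (tact k c d (tact k a c (Some u))))"
    by (simp only: tact_mirror_Some[OF k] tact_mirror[OF k] ok)
  then show ?thesis by (simp add: map_option_mirror_inject)
qed

theorem mainTheorem1:
  fixes k :: nat and u :: "int \<Rightarrow> int"
  assumes "k \<ge> 1" and "u \<in> affW0 k"
  shows
  "(\<forall>a b c d. okp k a b \<and> okp k c d \<and>
       a mod (int k + 1) \<noteq> b mod (int k + 1) \<and> a mod (int k + 1) \<noteq> c mod (int k + 1) \<and>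
       a mod (int k + 1) \<noteq> d mod (int k + 1) \<and> b mod (int k + 1) \<noteq> c mod (int k + 1) \<and>
       b mod (int k + 1) \<noteq> d mod (int k + 1) \<and> c mod (int k + 1) \<noteq> d mod (int k + 1)
     \<longrightarrow> topr k c d (topr k a b (basis u)) = topr k a b (topr k c d (basis u)))
 \<and> (\<forall>a b c d. okp k a b \<and> okp k c d \<and>
       ((a < c \<and> c < b \<and> b < d) \<or> (b = c \<and> d - a > int k + 1))
     \<longrightarrow> topr k c d (topr k a b (basis u)) = zw_zero
       \<and> topr k a b (topr k c d (basis u)) = zw_zero)
 \<and> (\<forall>a b c d. okp k a b \<and> okp k c d \<and>
       ((a mod (int k + 1) = c mod (int k + 1) \<and> b \<le> d) \<or>
        (b mod (int k + 1) = d mod (int k + 1) \<and> c \<le> a))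
     \<longrightarrow> topr k c d (topr k a b (basis u)) = zw_zero)
 \<and> (\<forall>a b d. a < b \<and> b < d \<and> d - a = int k + 1 \<and>
       okp k a b \<and> okp k b d \<and> okp k (b - int k - 1) a
     \<longrightarrow> topr k b d (topr k a b (basis u)) = topr k (b - int k - 1) a (topr k a b (basis u)))
 \<and> (\<forall>a b c d. a < b \<and> b < c \<and> c < d \<and>
       b mod (int k + 1) = c mod (int k + 1) \<and> d mod (int k + 1) = a mod (int k + 1) \<and>
       (b - a) + (d - c) = int k + 1 \<and>
       okp k a b \<and> okp k c d \<and> okp k (d - int k - 1) c \<and> okp k (b - int k - 1) a
     \<longrightarrow> topr k c d (topr k a b (basis u)) =
         topr k (b - int k - 1) a (topr k (d - int k - 1) c (basis u)))
 \<and> (\<forall>a b c d. a < b \<and> b < c \<and> c < d \<and> c - a \<le> int k \<and> d - b \<le> int k \<and>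
       okp k a b \<and> okp k b c \<and> okp k c d \<and> okp k a c \<and> okp k b d
     \<longrightarrow> topr k a c (topr k c d (topr k b c (basis u))) =
         topr k b c (topr k a b (topr k b d (basis u))))
 \<and> (\<forall>a b c d. a < b \<and> b < c \<and> c < d \<and> c - a \<le> int k \<and> d - b \<le> int k \<and>
       okp k a b \<and> okp k b c \<and> okp k c d \<and> okp k a c \<and> okp k b d
     \<longrightarrow> topr k b c (topr k c d (topr k a c (basis u))) =
         topr k b d (topr k a b (topr k b c (basis u))))
 \<and> (\<forall>a b c. a < b \<and> b < c \<and> c - a < int k + 1 \<and>
       okp k a b \<and> okp k b c
     \<longrightarrow> topr k b c (topr k a b (topr k b c (basis u))) = zw_zero
       \<and> topr k a b (topr k b c (topr k a b (basis u))) = zw_zero)"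
proof -
  have k: "k \<ge> 1" and u: "u \<in> affW k" using assms unfolding affW0_def by auto
  have g: "grassmannian k u" by (rule affW0_grassmannian[OF assms(2)])
  note reduce = zw_of_Some[symmetric] zw_of_None[symmetric] topr_zw_of zw_of_inject diff_diff_eq
  show ?thesis
    unfolding reduce
    using tact_comm[OF k u] tact_crossing_None[OF k u] tact_crossing_None_rev[OF k u]
      tact_far_None[OF k u g] tact_far_None_rev[OF k u g]
      tact_same_left_None[OF k u] tact_same_right_None[OF k u]
      tact_wrap[OF u] tact_wrap_pair[OF u] tact_braid[OF k u] tact_braid_rev[OF k u]
      tact_triple_None[OF k u] tact_triple_None_rev[OF k u]
    by (intro conjI allI impI) auto
qed

end
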